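(* In the Schwarzschild spacetime of mass $m>0$ written in ingoing Eddington--Finkelstein coordinates $(v,r,\omega)\in\mathbb R\times(0,\infty)\times S^2$, $\mathfrak g=-(1-\frac{2m}r)dv^2+2dv\,dr+r^2d\omega^2$, there exists a smooth one-parameter family of spacelike hypersurfaces $\{\Sigma_T\}_{T\in\mathbb R}$ such that: (i) the $\Sigma_T$ form a smooth foliation of the region $r>0$; equivalently $(T,r,\omega)$ is a smooth horizon-penetrating coordinate system with $\Sigma_T=\{T=\mathrm{const}\}$; (ii) each $\Sigma_T$ meets the future horizon $\mathcal H^+=\{r=2m\}$ in a round sphere $S_T=\Sigma_T\cap\mathcal H^+$, the family $\{S_T\}_{T\in\mathbb R}$ foliates $\mathcal H^+$, and each $S_T$ is a MOTS; (iii) there is a smooth function $r_{\mathrm{cut}}(T)=2m+2\delta_0e^{-T/(4m)}$, for some fixed constant $\delta_0>0$, so that $r_{\mathrm{cut}}(T)\downarrow2m$ as $T\to+\infty$ and $\Sigma_T\cap\{r\ge r_{\mathrm{cut}}(T)\}=\{t_{\mathrm{Sch}}=T\}\cap\{r\ge r_{\mathrm{cut}}(T)\}$; in particular $\Sigma_T$ is tangentially maximal on $r\ge r_{\mathrm{cut}}(T)$.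
   Context: On $r>2m$, the Schwarzschild time is $t_{\mathrm{Sch}}=v-r_*(r)$ with $r_*(r)=r+2m\log(\frac r{2m}-1)$. A MOTS is a closed spacelike surface whose future outgoing null expansion vanishes. A spacelike hypersurface foliated by closed spacelike surfaces (here the spheres $r=\mathrm{const}$) is tangentially maximal (on a region) if the trace over each leaf of its second fundamental form vanishes, equivalently the spacetime mean curvature vector of each leaf is tangent to the hypersurface. *)

theory Defs
  imports "HOL-Analysis.Analysis"
begin

text \<open>A function is smooth iff it is differentiable at every point of U
  with partial derivatives f1, f2 which are themselves smooth (greatest fixed point,
  i.e. all iterated partial derivatives exist).\<close>
coinductive smooth2 :: "(real \<times> real) set \<Rightarrow> (real \<times> real \<Rightarrow> real) \<Rightarrow> bool"
  for U :: "(real \<times> real) set" where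
  "(\<forall>z\<in>U. (f has_derivative (\<lambda>h. fst h * f1 z + snd h * f2 z)) (at z))
    \<Longrightarrow> smooth2 U f1 \<Longrightarrow> smooth2 U f2 \<Longrightarrow> smooth2 U f"

text \<open>Ingoing Eddington--Finkelstein chart: coordinates (v,r) with r>0 (the sphere factor
  is suppressed; all hypersurfaces considered are spherically symmetric graphs
  v = V T r over r \<in> (0,\<infinity>)).\<close>
definition EF_region :: "(real \<times> real) set" where
  "EF_region = UNIV \<times> {0<..}"

definition lapse :: "real \<Rightarrow> real \<Rightarrow> real" where
  "lapse m r = 1 - 2 * m / r"

text \<open>Tortoise coordinate r_* on r>2m and Schwarzschild time t = v - r_*(r).\<close>
definition rstar :: "real \<Rightarrow> real \<Rightarrow> real" where
  "rstar m r = r + 2 * m * ln (r / (2 * m) - 1)"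

definition t_Sch :: "real \<Rightarrow> real \<Rightarrow> real \<Rightarrow> real" where
  "t_Sch m v r = v - rstar m r"

text \<open>The hypersurface {v = V T r} is spacelike at radius r: the induced metric
  g(X,X) for X = V_r d/dv + d/dr, namely 2 V_r - (1-2m/r) V_r^2, is positive
  (the angular part r^2 d\<omega>^2 is positive for r>0).\<close>
definition spacelike_graph :: "real \<Rightarrow> (real \<Rightarrow> real) \<Rightarrow> real \<Rightarrow> bool" where
  "spacelike_graph m W r \<longleftrightarrow>
     (let Wr = deriv W r in 2 * Wr - lapse m r * Wr^2 > 0)"

text \<open>Future outgoing null expansion of the round sphere {v = v0, r = r0}:
  with future outgoing null normal l = d/dv + (1/2)(1-2m/r) d/dr,
  theta_+ = (2/r) l(r) = (1/r0)(1 - 2m/r0).\<close>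
definition outgoing_expansion :: "real \<Rightarrow> real \<Rightarrow> real" where
  "outgoing_expansion m r0 = (1 / r0) * lapse m r0"

definition is_MOTS_sphere :: "real \<Rightarrow> real \<Rightarrow> bool" where
  "is_MOTS_sphere m r0 \<longleftrightarrow> outgoing_expansion m r0 = 0"

text \<open>Tangential maximality of the graph {v = W r} at radius r: the mean curvature
  vector of the leaf sphere, -(2/r) grad r with grad r = d/dv + (1-2m/r) d/dr, is tangent
  to the hypersurface, whose radial tangent is W' d/dv + d/dr; i.e.
  1 - (1-2m/r) W'(r) = 0.\<close>
definition tangentially_maximal_at :: "real \<Rightarrow> (real \<Rightarrow> real) \<Rightarrow> real \<Rightarrow> bool" where
  "tangentially_maximal_at m W r \<longleftrightarrow> lapse m r * deriv W r = 1"

end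

theory Submission
  imports Defs "HOL-Computational_Algebra.Polynomial" "HOL-Real_Asymp.Real_Asymp"
begin

text \<open>Let g be a smooth function with g > 0, 0 <= g' <= 1, g(y) = y for y >= 1 and (y g(y))' > 0
  (built from exp(-1/s)), put y = (r - 2m) e^(T/4m) and take as leaves the graphs
  v = V(T,r) = T/2 + r + 2m log(g(y)/2m). Where y >= 1, i.e. r >= 2m + e^(-T/4m), this is
  T + r_*(r): the leaf coincides with the Schwarzschild slice t = T, which is tangentially maximal;
  this is the cut-off of (iii) with delta0 = 1/2. Everywhere dV/dT = (g + y g')/(2g) > 0, and
  V(T,r) - T/2 is bounded below, and bounded above for T <= 0, so T -> V(T,r) is a bijection of R
  whose inverse is smooth by the inverse function theorem. Finally 1 <= V_r and
  (1 - 2m/r) V_r <= 1, so 2 V_r - (1 - 2m/r) V_r^2 > 0 and the leaves are spacelike; the horizon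
  spheres are MOTS because 1 - 2m/r vanishes at r = 2m.\<close>

coinductive smooth1 :: "real set \<Rightarrow> (real \<Rightarrow> real) \<Rightarrow> bool" for S :: "real set" where
  "(\<forall>x\<in>S. (f has_real_derivative f' x) (at x)) \<Longrightarrow> smooth1 S f' \<Longrightarrow> smooth1 S f"

lemma smooth1_if_derivative_closed:
  fixes F :: "'i \<Rightarrow> real \<Rightarrow> real"
  assumes "\<And>i x. x \<in> S \<Longrightarrow> (F i has_real_derivative F (d i) x) (at x)"
  shows "smooth1 S (F i)"
proof (coinduction arbitrary: i rule: smooth1.coinduct)
  case (smooth1 i)
  show ?case
    using assms by (intro exI[of _ "F i"] exI[of _ "F (d i)"] conjI ballI disjI1 exI[of _ "d i"] refl)
qed

lemma smooth1_exp: "smooth1 S exp"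
  using smooth1_if_derivative_closed[of S "\<lambda>_. exp" id] by (simp add: DERIV_exp)

lemma smooth1_inverse_power:
  assumes "0 \<notin> S"
  shows "smooth1 S (\<lambda>x. c * inverse x ^ n)"
proof -
  have "((\<lambda>x. c * inverse x ^ n) has_real_derivative (- c * n) * inverse x ^ Suc n) (at x)"
    if "x \<in> S" for c :: real and n x
  proof -
    have "x \<noteq> 0" using that assms by auto
    then show ?thesis
      by (rule DERIV_cong[OF DERIV_cmult[OF DERIV_power[OF DERIV_inverse]]])
        (cases n, simp_all add: divide_simps)
  qed
  then show ?thesis
    using smooth1_if_derivative_closed[of S "\<lambda>(c, n) x. c * inverse x ^ n" "\<lambda>(c, n). (- c * n, Suc n)" "(c, n)"]
    by fastforce
qed

lemma smooth1_ln: "smooth1 {0<..} ln"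
proof (rule smooth1.intros)
  show "\<forall>x\<in>{0<..}. (ln has_real_derivative 1 * inverse x ^ 1) (at x)"
    by (auto intro!: derivative_eq_intros simp: field_simps)
qed (rule smooth1_inverse_power, simp)

text \<open>Closure of \<open>smooth2\<close> under sums and products cannot be proved by plain coinduction, since
  the derivatives of a product involve further sums and products; the coinduction is therefore
  carried out up to the class generated by these operations.\<close>

inductive smooth2_generated :: "(real \<times> real) set \<Rightarrow> (real \<times> real \<Rightarrow> real) \<Rightarrow> bool"
  for U :: "(real \<times> real) set" where
  base: "smooth2 U f \<Longrightarrow> smooth2_generated U f"
| add: "smooth2_generated U f \<Longrightarrow> smooth2_generated U g \<Longrightarrow> smooth2_generated U (\<lambda>z. f z + g z)"
| mult: "smooth2_generated U f \<Longrightarrow> smooth2_generated U g \<Longrightarrow> smooth2_generated U (\<lambda>z. f z * g z)"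
| compose: "smooth1 S \<phi> \<Longrightarrow> smooth2_generated U f \<Longrightarrow> (\<forall>z\<in>U. f z \<in> S)
    \<Longrightarrow> smooth2_generated U (\<lambda>z. \<phi> (f z))"

lemma smooth2_generated_has_derivative:
  assumes "smooth2_generated U f"
  shows "\<exists>f1 f2. (\<forall>z\<in>U. (f has_derivative (\<lambda>h. fst h * f1 z + snd h * f2 z)) (at z))
    \<and> smooth2_generated U f1 \<and> smooth2_generated U f2"
  using assms
proof (induction rule: smooth2_generated.induct)
  case (base f)
  then show ?case by (cases rule: smooth2.cases) (auto intro: smooth2_generated.base)
next
  case (add f g)
  then obtain f1 f2 g1 g2
    where f: "\<forall>z\<in>U. (f has_derivative (\<lambda>h. fst h * f1 z + snd h * f2 z)) (at z)"
      "smooth2_generated U f1" "smooth2_generated U f2"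
    and g: "\<forall>z\<in>U. (g has_derivative (\<lambda>h. fst h * g1 z + snd h * g2 z)) (at z)"
      "smooth2_generated U g1" "smooth2_generated U g2"
    by blast
  have "((\<lambda>z. f z + g z) has_derivative
      (\<lambda>h. fst h * (f1 z + g1 z) + snd h * (f2 z + g2 z))) (at z)" if "z \<in> U" for z
    using has_derivative_add[OF f(1)[rule_format, OF that] g(1)[rule_format, OF that]]
    by (simp add: algebra_simps)
  with f g show ?case
    by (intro exI[of _ "\<lambda>z. f1 z + g1 z"] exI[of _ "\<lambda>z. f2 z + g2 z"])
      (auto intro: smooth2_generated.add)
next
  case (mult f g)
  then obtain f1 f2 g1 g2
    where f: "\<forall>z\<in>U. (f has_derivative (\<lambda>h. fst h * f1 z + snd h * f2 z)) (at z)"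
      "smooth2_generated U f1" "smooth2_generated U f2"
    and g: "\<forall>z\<in>U. (g has_derivative (\<lambda>h. fst h * g1 z + snd h * g2 z)) (at z)"
      "smooth2_generated U g1" "smooth2_generated U g2"
    by blast
  have "((\<lambda>z. f z * g z) has_derivative (\<lambda>h. fst h * (f z * g1 z + f1 z * g z)
      + snd h * (f z * g2 z + f2 z * g z))) (at z)" if "z \<in> U" for z
    using has_derivative_mult[OF f(1)[rule_format, OF that] g(1)[rule_format, OF that]]
    by (simp add: algebra_simps)
  with f g mult.hyps show ?case
    by (intro exI[of _ "\<lambda>z. f z * g1 z + f1 z * g z"] exI[of _ "\<lambda>z. f z * g2 z + f2 z * g z"])
      (auto intro: smooth2_generated.add smooth2_generated.mult)
next
  case (compose S \<phi> f)
  from compose.hyps(1) obtain \<phi>'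
    where \<phi>: "\<forall>x\<in>S. (\<phi> has_real_derivative \<phi>' x) (at x)" "smooth1 S \<phi>'"
    by (cases rule: smooth1.cases) auto
  from compose.IH obtain f1 f2
    where f: "\<forall>z\<in>U. (f has_derivative (\<lambda>h. fst h * f1 z + snd h * f2 z)) (at z)"
      "smooth2_generated U f1" "smooth2_generated U f2"
    by blast
  have "((\<lambda>z. \<phi> (f z)) has_derivative
      (\<lambda>h. fst h * (\<phi>' (f z) * f1 z) + snd h * (\<phi>' (f z) * f2 z))) (at z)" if "z \<in> U" for z
    using DERIV_compose_FDERIV[OF \<phi>(1)[rule_format] f(1)[rule_format, OF that]] compose.hyps(3) that
    by (simp add: algebra_simps)
  moreover have "smooth2_generated U (\<lambda>z. \<phi>' (f z))"
    using \<phi>(2) compose.hyps(2,3) by (rule smooth2_generated.compose)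
  ultimately show ?case using f
    by (intro exI[of _ "\<lambda>z. \<phi>' (f z) * f1 z"] exI[of _ "\<lambda>z. \<phi>' (f z) * f2 z"])
      (auto intro: smooth2_generated.mult)
qed

lemma smooth2_generated_imp_smooth2: "smooth2_generated U f \<Longrightarrow> smooth2 U f"
  by (coinduction arbitrary: f rule: smooth2.coinduct) (use smooth2_generated_has_derivative in blast)

lemma smooth2_add: "smooth2 U f \<Longrightarrow> smooth2 U g \<Longrightarrow> smooth2 U (\<lambda>z. f z + g z)"
  by (rule smooth2_generated_imp_smooth2)
    (rule smooth2_generated.add[OF smooth2_generated.base smooth2_generated.base])

lemma smooth2_mult: "smooth2 U f \<Longrightarrow> smooth2 U g \<Longrightarrow> smooth2 U (\<lambda>z. f z * g z)"
  by (rule smooth2_generated_imp_smooth2)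
    (rule smooth2_generated.mult[OF smooth2_generated.base smooth2_generated.base])

lemma smooth2_compose:
  "smooth1 S \<phi> \<Longrightarrow> smooth2 U f \<Longrightarrow> (\<And>z. z \<in> U \<Longrightarrow> f z \<in> S)
    \<Longrightarrow> smooth2 U (\<lambda>z. \<phi> (f z))"
  by (rule smooth2_generated_imp_smooth2[OF smooth2_generated.compose[OF _ smooth2_generated.base]]) auto

lemma smooth2_const: "smooth2 U (\<lambda>z. c)"
proof (coinduction arbitrary: c rule: smooth2.coinduct)
  case (smooth2 c)
  show ?case
    by (intro exI[of _ "\<lambda>z. c"] exI[of _ "\<lambda>z. 0"] conjI ballI disjI1 exI[of _ 0] refl) simp
qed

lemma smooth2_fst: "smooth2 U fst"
  by (rule smooth2.intros[where ?f1.0 = "\<lambda>z. 1" and ?f2.0 = "\<lambda>z. 0"])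
    (auto intro!: smooth2_const derivative_eq_intros)

lemma smooth2_snd: "smooth2 U snd"
  by (rule smooth2.intros[where ?f1.0 = "\<lambda>z. 0" and ?f2.0 = "\<lambda>z. 1"])
    (auto intro!: smooth2_const derivative_eq_intros)

lemma smooth2_minus: "smooth2 U f \<Longrightarrow> smooth2 U (\<lambda>z. - f z)"
  using smooth2_mult[OF smooth2_const[of U "-1"], of f] by simp

lemma smooth2_diff: "smooth2 U f \<Longrightarrow> smooth2 U g \<Longrightarrow> smooth2 U (\<lambda>z. f z - g z)"
  using smooth2_add[OF _ smooth2_minus[of U g], of f] by simp

lemma smooth2_divide_const: "smooth2 U f \<Longrightarrow> smooth2 U (\<lambda>z. f z / c)"
  using smooth2_mult[OF _ smooth2_const[of U "1 / c"], of f] by simp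

lemma smooth2_exp: "smooth2 U f \<Longrightarrow> smooth2 U (\<lambda>z. exp (f z))"
  by (rule smooth2_compose[OF smooth1_exp[of UNIV]]) auto

lemma smooth2_ln:
  "smooth2 U f \<Longrightarrow> (\<And>z. z \<in> U \<Longrightarrow> f z > 0) \<Longrightarrow> smooth2 U (\<lambda>z. ln (f z))"
  by (rule smooth2_compose[OF smooth1_ln]) auto

lemma smooth2_inverse:
  "smooth2 U f \<Longrightarrow> (\<And>z. z \<in> U \<Longrightarrow> f z \<noteq> 0) \<Longrightarrow> smooth2 U (\<lambda>z. inverse (f z))"
  using smooth2_compose[OF smooth1_inverse_power[of "-{0}" 1 1], of U f] by auto

text \<open>The Jacobian of \<open>G\<close> is a smooth matrix evaluated at \<open>G z\<close>, as for the inverse of a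
  smooth map; this is what makes the class of all \<open>H \<circ> G\<close> with \<open>H\<close> smooth closed under
  differentiation.\<close>

lemma smooth2_compose_map:
  assumes maps: "\<And>z. z \<in> U \<Longrightarrow> G z \<in> U"
    and G: "\<And>z. z \<in> U \<Longrightarrow> (G has_derivative (\<lambda>h. (fst h * A (G z) + snd h * B (G z),
                                                    fst h * C (G z) + snd h * D (G z)))) (at z)"
    and smooth: "smooth2 U A" "smooth2 U B" "smooth2 U C" "smooth2 U D"
    and H: "smooth2 U H"
  shows "smooth2 U (\<lambda>z. H (G z))"
  using H
proof (coinduction arbitrary: H rule: smooth2.coinduct)
  case (smooth2 H)
  then obtain H1 H2
    where H: "\<forall>w\<in>U. (H has_derivative (\<lambda>h. fst h * H1 w + snd h * H2 w)) (at w)"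
      and H': "smooth2 U H1" "smooth2 U H2"
    by (cases rule: smooth2.cases) auto
  define K1 where "K1 w = H1 w * A w + H2 w * C w" for w
  define K2 where "K2 w = H1 w * B w + H2 w * D w" for w
  have K: "smooth2 U K1" "smooth2 U K2"
    unfolding K1_def K2_def using smooth H' by (auto intro!: smooth2_add smooth2_mult)
  have deriv: "((\<lambda>z. H (G z)) has_derivative (\<lambda>h. fst h * K1 (G z) + snd h * K2 (G z))) (at z)"
    if "z \<in> U" for z
    using diff_chain_at[OF G[OF that] H[rule_format, OF maps[OF that]]]
    by (simp add: o_def K1_def K2_def algebra_simps)
  have K': "\<exists>K. (\<lambda>z. K1 (G z)) = (\<lambda>z. K (G z)) \<and> smooth2 U K"
    "\<exists>K. (\<lambda>z. K2 (G z)) = (\<lambda>z. K (G z)) \<and> smooth2 U K"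
    using K by blast+
  show ?case
    by (intro exI[of _ "\<lambda>z. H (G z)"] exI[of _ "\<lambda>z. K1 (G z)"] exI[of _ "\<lambda>z. K2 (G z)"]
        conjI ballI disjI1 refl K') (rule deriv)
qed

lemma has_real_derivative_first_variable:
  fixes F :: "real \<times> real \<Rightarrow> real"
  assumes "(F has_derivative (\<lambda>h. fst h * a + snd h * b)) (at (x, y))"
  shows "((\<lambda>x. F (x, y)) has_real_derivative a) (at x)"
proof -
  have "((\<lambda>x. (x, y)) has_derivative (\<lambda>h. (h, 0))) (at x)"
    by (auto intro!: derivative_eq_intros)
  from diff_chain_at[OF this assms]
  show ?thesis by (simp add: o_def mult_commute_abs has_field_derivative_def)
qed

lemma has_derivative_inverse_first_variable:
  fixes F G :: "real \<times> real \<Rightarrow> real \<times> real"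
  assumes "open U" and "x \<in> U" and "continuous_on U F" and "\<And>x. x \<in> U \<Longrightarrow> G (F x) = x"
    and "(F has_derivative (\<lambda>h. (fst h * a + snd h * b, snd h))) (at x)" and "a \<noteq> 0"
  shows "(G has_derivative (\<lambda>h. (fst h * inverse a + snd h * (- b * inverse a), fst h * 0 + snd h * 1))) (at (F x))"
proof (rule has_derivative_inverse_strong[OF assms(1-5)])
  show "(\<lambda>h. (fst h * a + snd h * b, snd h)) \<circ>
      (\<lambda>h. (fst h * inverse a + snd h * (- b * inverse a), fst h * 0 + snd h * 1)) = id"
    using \<open>a \<noteq> 0\<close> by (auto simp: fun_eq_iff field_simps)
qed

lemma smooth2_inverse_in_first_variable:
  fixes V W V1 :: "real \<Rightarrow> real \<Rightarrow> real"
  assumes "open R"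
    and smooth: "smooth2 (UNIV \<times> R) (case_prod V)"
    and deriv: "\<And>T r. r \<in> R \<Longrightarrow> ((\<lambda>T. V T r) has_real_derivative V1 T r) (at T)"
    and nonzero: "\<And>T r. r \<in> R \<Longrightarrow> V1 T r \<noteq> 0"
    and inverse: "\<And>T r. r \<in> R \<Longrightarrow> W (V T r) r = T" "\<And>v r. r \<in> R \<Longrightarrow> V (W v r) r = v"
  shows "smooth2 (UNIV \<times> R) (case_prod W)"
proof -
  let ?U = "UNIV \<times> R"
  obtain f1 f2
    where Df: "\<And>z. z \<in> ?U \<Longrightarrow> (case_prod V has_derivative (\<lambda>h. fst h * f1 z + snd h * f2 z)) (at z)"
    and f1: "smooth2 ?U f1" and f2: "smooth2 ?U f2"
    using smooth by (cases rule: smooth2.cases) auto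
  have f1_nonzero: "f1 z \<noteq> 0" if "z \<in> ?U" for z
  proof -
    obtain T r where z: "z = (T, r)" by fastforce
    with that have "r \<in> R" by simp
    have "((\<lambda>T. V T r) has_real_derivative f1 (T, r)) (at T)"
      using has_real_derivative_first_variable[OF Df[OF that[unfolded z]]] by simp
    then have "f1 (T, r) = V1 T r" using deriv[OF \<open>r \<in> R\<close>] by (rule DERIV_unique)
    then show ?thesis using nonzero[OF \<open>r \<in> R\<close>] z by simp
  qed
  define F where "F z = (case_prod V z, snd z)" for z
  define G where "G z = (case_prod W z, snd z)" for z
  have G_in: "G z \<in> ?U" if "z \<in> ?U" for z using that by (auto simp: G_def)
  have DF: "(F has_derivative (\<lambda>h. (fst h * f1 z + snd h * f2 z, snd h))) (at z)" if "z \<in> ?U" for z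
    unfolding F_def by (intro has_derivative_Pair Df[OF that] has_derivative_snd has_derivative_ident)
  have "continuous_on ?U F"
    using DF by (meson continuous_at_imp_continuous_on has_derivative_continuous)
  have DG: "(G has_derivative (\<lambda>h. (fst h * inverse (f1 (G z)) + snd h * (- f2 (G z) * inverse (f1 (G z))),
      fst h * 0 + snd h * 1))) (at z)" if z: "z \<in> ?U" for z
  proof -
    have "f1 (G z) \<noteq> 0" using f1_nonzero[OF G_in[OF z]] .
    have "open ?U" using \<open>open R\<close> by (simp add: open_Times)
    have GF: "G (F x) = x" if "x \<in> ?U" for x using inverse(1) that by (auto simp: F_def G_def)
    note has_derivative_inverse_first_variable[OF \<open>open ?U\<close> G_in[OF z] \<open>continuous_on ?U F\<close> GF
        DF[OF G_in[OF z]] \<open>f1 (G z) \<noteq> 0\<close>]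
    moreover have "F (G z) = z" using inverse(2) z by (auto simp: F_def G_def)
    ultimately show ?thesis by simp
  qed
  have A: "smooth2 ?U (\<lambda>w. inverse (f1 w))"
    using f1 f1_nonzero by (rule smooth2_inverse)
  have B: "smooth2 ?U (\<lambda>w. - f2 w * inverse (f1 w))"
    by (rule smooth2_mult[OF smooth2_minus[OF f2] A])
  have "smooth2 ?U (\<lambda>z. fst (G z))"
    by (rule smooth2_compose_map[where A = "\<lambda>w. inverse (f1 w)" and B = "\<lambda>w. - f2 w * inverse (f1 w)"
          and C = "\<lambda>w. 0" and D = "\<lambda>w. 1", OF G_in DG A B smooth2_const smooth2_const smooth2_fst])
  then show ?thesis by (simp add: G_def split_beta')
qed

definition flat :: "real poly \<Rightarrow> real \<Rightarrow> real" where
  "flat p s = (if s > 0 then poly p (1 / s) * exp (- (1 / s)) else 0)"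

lemma tendsto_poly_times_exp_neg: "((\<lambda>t. poly p t * exp (- t)) \<longlongrightarrow> (0::real)) at_top"
proof -
  have "((\<lambda>t. \<Sum>i\<le>degree p. coeff p i * (t ^ i / exp t)) \<longlongrightarrow> (\<Sum>i\<le>degree p. coeff p i * 0)) at_top"
    by (intro tendsto_sum tendsto_mult tendsto_const tendsto_power_div_exp_0)
  then show ?thesis
    by (simp add: poly_altdef sum_distrib_right exp_minus field_simps sum_divide_distrib)
qed

lemma flat_has_derivative_at_0: "(flat p has_real_derivative 0) (at 0)"
proof -
  have "((\<lambda>t. poly ([:0, 1:] * p) t * exp (- t)) \<longlongrightarrow> 0) at_top"
    by (rule tendsto_poly_times_exp_neg)
  then have "((\<lambda>s. poly ([:0, 1:] * p) (inverse s) * exp (- inverse s)) \<longlongrightarrow> 0) (at_right 0)"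
    using filterlim_compose filterlim_inverse_at_top_right by blast
  moreover have "\<forall>\<^sub>F s in at_right 0.
      poly ([:0, 1:] * p) (inverse s) * exp (- inverse s) = (flat p s - flat p 0) / (s - 0)"
    using eventually_at_right_less
    by (rule eventually_mono) (simp add: flat_def divide_inverse mult_ac)
  ultimately have right: "((\<lambda>s. (flat p s - flat p 0) / (s - 0)) \<longlongrightarrow> 0) (at_right 0)"
    by (rule Lim_transform_eventually)
  have "\<forall>\<^sub>F s in at_left 0. (flat p s - flat p 0) / (s - 0) = 0"
    by (rule eventually_at_leftI[of "-1"]) (simp_all add: flat_def)
  then have left: "((\<lambda>s. (flat p s - flat p 0) / (s - 0)) \<longlongrightarrow> 0) (at_left 0)"
    by (rule tendsto_eventually)
  show ?thesis
    unfolding has_field_derivative_iff using filterlim_split_at[OF left right] by simp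
qed

lemma flat_has_derivative: "(flat p has_real_derivative flat ([:0, 0, 1:] * (p - pderiv p)) s) (at s)"
proof (cases s "0::real" rule: linorder_cases)
  case less
  have "((\<lambda>_. 0) has_real_derivative 0) (at s)" by simp
  then have "(flat p has_real_derivative 0) (at s)"
    by (rule has_field_derivative_transform_within_open[where S = "{..<0}"])
      (use less in \<open>auto simp: flat_def\<close>)
  then show ?thesis using less by (simp add: flat_def)
next
  case equal
  then show ?thesis using flat_has_derivative_at_0 by (simp add: flat_def)
next
  case greater
  let ?D = "poly (pderiv p) (1 / s) * (- 1 / s\<^sup>2) * exp (- (1 / s))
    + poly p (1 / s) * (exp (- (1 / s)) * (1 / s\<^sup>2))"
  have "((\<lambda>s. poly p (1 / s) * exp (- (1 / s))) has_real_derivative ?D) (at s)"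
    using greater
    by (auto intro!: derivative_eq_intros DERIV_chain2[OF poly_DERIV] simp: power2_eq_square field_simps)
  then have "(flat p has_real_derivative ?D) (at s)"
    by (rule has_field_derivative_transform_within_open[where S = "{0<..}"])
      (use greater in \<open>auto simp: flat_def\<close>)
  moreover have "?D = flat ([:0, 0, 1:] * (p - pderiv p)) s"
    using greater by (simp add: flat_def algebra_simps power2_eq_square)
  ultimately show ?thesis by simp
qed

lemma smooth1_flat: "smooth1 S (flat p)"
  using flat_has_derivative by (rule smooth1_if_derivative_closed)

lemma flat_one: "flat [:1:] s = (if s > 0 then exp (- (1 / s)) else 0)"
  by (simp add: flat_def)

text \<open>The coefficient \<open>3 / 2 - y\<close> rather than \<open>1 - y\<close> makes \<open>soft_id\<close> tend to \<open>1 / 2\<close>,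
  not to \<open>0\<close>, as \<open>y \<rightarrow> -\<infinity>\<close>.\<close>

definition soft_id :: "real \<Rightarrow> real" where
  "soft_id y = y + (3 / 2 - y) * flat [:1:] (1 - y)"

definition soft_id' :: "real \<Rightarrow> real" where
  "soft_id' y = (if y < 1 then 1 - exp (- (1 / (1 - y))) * (1 + 1 / (1 - y) + 1 / (2 * (1 - y)\<^sup>2)) else 1)"

lemma soft_id_has_derivative: "(soft_id has_real_derivative soft_id' y) (at y)"
proof -
  define d where "d s = (if s > 0 then exp (- (1 / s)) / s\<^sup>2 else 0)" for s :: real
  have "flat ([:0, 0, 1:] * ([:1:] - pderiv [:1:])) s = d s" for s
    by (simp add: d_def flat_def pderiv_pCons field_simps power2_eq_square)
  then have "(flat [:1:] has_real_derivative d s) (at s)" for s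
    by (metis flat_has_derivative)
  moreover have "((\<lambda>y. 1 - y) has_real_derivative - 1) (at y)"
    by (auto intro!: derivative_eq_intros)
  ultimately have chain: "((\<lambda>y. flat [:1:] (1 - y)) has_real_derivative d (1 - y) * - 1) (at y)"
    by (rule DERIV_chain2)
  have "((\<lambda>y. 3 / 2 - y) has_real_derivative - 1) (at y)"
    by (auto intro!: derivative_eq_intros)
  from DERIV_add[OF DERIV_ident DERIV_mult[OF this chain]]
  have "(soft_id has_real_derivative 1 + (- 1 * flat [:1:] (1 - y) + d (1 - y) * - 1 * (3 / 2 - y))) (at y)"
    unfolding soft_id_def[abs_def] .
  moreover have "1 + (- 1 * flat [:1:] (1 - y) + d (1 - y) * - 1 * (3 / 2 - y)) = soft_id' y"
  proof (cases "y < 1")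
    case True
    then obtain s where s: "0 < s" "y = 1 - s" by (intro that[of "1 - y"]) auto
    show ?thesis
      unfolding s(2) using s(1) by (simp add: d_def soft_id'_def flat_one field_simps power2_eq_square)
  qed (simp add: d_def soft_id'_def flat_one)
  ultimately show ?thesis by simp
qed

lemma has_real_derivative_soft_id:
  "(f has_real_derivative f') (at x within S)
    \<Longrightarrow> ((\<lambda>x. soft_id (f x)) has_real_derivative soft_id' (f x) * f') (at x within S)"
  by (rule DERIV_chain2[OF soft_id_has_derivative])

lemma smooth2_soft_id: "smooth2 U f \<Longrightarrow> smooth2 U (\<lambda>z. soft_id (f z))"
  unfolding soft_id_def
  by (intro smooth2_add smooth2_mult smooth2_diff smooth2_const smooth2_compose[OF smooth1_flat]) auto

lemma soft_id_eq: "1 \<le> y \<Longrightarrow> soft_id y = y"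
  by (simp add: soft_id_def flat_one)

lemma soft_id'_eq: "1 \<le> y \<Longrightarrow> soft_id' y = 1"
  by (simp add: soft_id'_def)

lemma soft_id_below_one:
  assumes "y < 1"
  obtains u where "0 < u" "y = 1 - 1 / u"
    "soft_id y = 1 - 1 / u + (1 / u + 1 / 2) * exp (- u)"
    "soft_id' y = 1 - exp (- u) * (1 + u + u\<^sup>2 / 2)"
proof
  let ?u = "1 / (1 - y)"
  show "0 < ?u" "y = 1 - 1 / ?u" using assms by auto
  show "soft_id y = 1 - 1 / ?u + (1 / ?u + 1 / 2) * exp (- ?u)"
    using assms by (simp add: soft_id_def flat_one algebra_simps)
  show "soft_id' y = 1 - exp (- ?u) * (1 + ?u + ?u\<^sup>2 / 2)"
    using assms by (simp add: soft_id'_def power_divide)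
qed

lemma soft_id'_nonneg: "0 \<le> soft_id' y"
proof (cases "y < 1")
  case True
  then obtain u where u: "0 < u" "y = 1 - 1 / u"
    "soft_id y = 1 - 1 / u + (1 / u + 1 / 2) * exp (- u)" "soft_id' y = 1 - exp (- u) * (1 + u + u\<^sup>2 / 2)"
    by (rule soft_id_below_one)
  have "exp (- u) * (1 + u + u\<^sup>2 / 2) \<le> exp (- u) * exp u"
    using u exp_lower_Taylor_quadratic[of u] by (intro mult_left_mono) auto
  with u(4) show ?thesis by (simp add: exp_minus)
qed (simp add: soft_id'_eq)

lemma soft_id'_le_one: "soft_id' y \<le> 1"
  by (simp add: soft_id'_def)

lemma soft_id_ge: "y \<le> soft_id y"
  by (simp add: soft_id_def flat_one)

lemma soft_id_le: "soft_id y \<le> \<bar>y\<bar> + 3 / 2"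
proof (cases "y < 1")
  case True
  then have "(3 / 2 - y) * flat [:1:] (1 - y) \<le> (3 / 2 - y) * 1"
    by (intro mult_left_mono) (auto simp: flat_one)
  then show ?thesis by (simp add: soft_id_def)
qed (simp add: soft_id_eq)

lemma mult_soft_id'_le_soft_id:
  assumes "0 \<le> y"
  shows "y * soft_id' y \<le> soft_id y"
proof -
  have "y * soft_id' y \<le> y"
    using assms soft_id'_le_one[of y] by (simp add: mult_left_le)
  then show ?thesis using soft_id_ge[of y] by linarith
qed

lemma mono_soft_id: "mono soft_id"
proof (rule monoI)
  fix a b :: real
  assume "a \<le> b"
  then show "soft_id a \<le> soft_id b"
    by (rule DERIV_nonneg_imp_nondecreasing) (use soft_id_has_derivative soft_id'_nonneg in blast)
qed

lemma soft_id_ge_quarter: "1 / 4 \<le> soft_id y"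
proof -
  have "1 / 4 \<le> soft_id y" if "y \<le> -1" for y
  proof -
    have "y < 1" using \<open>y \<le> -1\<close> by simp
    then obtain u where u: "0 < u" "y = 1 - 1 / u" "soft_id y = 1 - 1 / u + (1 / u + 1 / 2) * exp (- u)"
      "soft_id' y = 1 - exp (- u) * (1 + u + u\<^sup>2 / 2)"
      by (rule soft_id_below_one)
    have "2 \<le> 1 / u" using u(2) \<open>y \<le> -1\<close> by simp
    then have "u \<le> 1 / 2" using u(1) by (simp add: field_simps)
    have "(1 / u + 1 / 2) * (1 - u) \<le> (1 / u + 1 / 2) * exp (- u)"
      using u exp_ge_add_one_self[of "- u"] by (intro mult_left_mono) auto
    moreover have "1 - 1 / u + (1 / u + 1 / 2) * (1 - u) = 1 / 2 - u / 2"
      using u(1) by (simp add: field_simps)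
    ultimately show ?thesis using u(3) \<open>u \<le> 1 / 2\<close> by linarith
  qed
  then show ?thesis
    using mono_soft_id by (cases "y \<le> -1") (force dest: monoD[of _ "-1" y])+
qed

lemma soft_id_pos: "0 < soft_id y"
  using soft_id_ge_quarter[of y] by linarith

lemma exp_cubic_bound:
  fixes u :: real
  assumes "0 < u"
  shows "2 * (1 - u) * exp u < 2 + u / 2 - u\<^sup>2 / 2 - u ^ 3 / 2"
proof -
  let ?f = "\<lambda>x::real. 2 + x / 2 - x\<^sup>2 / 2 - x ^ 3 / 2 - 2 * (1 - x) * exp x"
  have "?f 0 < ?f u"
  proof (rule DERIV_pos_imp_increasing[OF assms])
    fix x :: real
    assume "0 \<le> x"
    have "(?f has_real_derivative 1 / 2 - x - 3 * x\<^sup>2 / 2 + 2 * x * exp x) (at x)"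
      by (auto intro!: derivative_eq_intros simp: algebra_simps)
    moreover have "2 * x * (1 + x) \<le> 2 * x * exp x"
      using \<open>0 \<le> x\<close> exp_ge_add_one_self[of x] by (intro mult_left_mono) auto
    then have "2 * x + 2 * x\<^sup>2 \<le> 2 * x * exp x"
      by (simp add: power2_eq_square algebra_simps)
    then have "0 < 1 / 2 - x - 3 * x\<^sup>2 / 2 + 2 * x * exp x"
      using \<open>0 \<le> x\<close> zero_le_power2[of x] by linarith
    ultimately show "\<exists>y. (?f has_real_derivative y) (at x) \<and> 0 < y" by blast
  qed
  then show ?thesis by simp
qed

lemma soft_id_plus_id_times_soft_id'_pos: "0 < soft_id y + y * soft_id' y"
proof (cases "y < 0")
  case True
  then have "y < 1" by simp
  then obtain u where u: "0 < u" "y = 1 - 1 / u"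
    "soft_id y = 1 - 1 / u + (1 / u + 1 / 2) * exp (- u)" "soft_id' y = 1 - exp (- u) * (1 + u + u\<^sup>2 / 2)"
    by (rule soft_id_below_one)
  have "2 * (1 - u) * exp u * exp (- u) < (2 + u / 2 - u\<^sup>2 / 2 - u ^ 3 / 2) * exp (- u)"
    using exp_cubic_bound[OF \<open>0 < u\<close>] by (intro mult_strict_right_mono) auto
  then have "2 * (1 - u) < (2 + u / 2 - u\<^sup>2 / 2 - u ^ 3 / 2) * exp (- u)"
    by (simp add: mult.assoc exp_minus_inverse)
  moreover have "soft_id y + y * soft_id' y
      = 1 - 1 / u + (1 / u + 1 / 2) * exp (- u) + (1 - 1 / u) * (1 - exp (- u) * (1 + u + u\<^sup>2 / 2))"
    by (simp only: u(3,4)) (simp only: u(2))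
  moreover have "u * (1 - 1 / u + (1 / u + 1 / 2) * exp (- u)
        + (1 - 1 / u) * (1 - exp (- u) * (1 + u + u\<^sup>2 / 2)))
      = 2 * (u - 1) + (2 + u / 2 - u\<^sup>2 / 2 - u ^ 3 / 2) * exp (- u)"
    using \<open>0 < u\<close> by (simp add: field_simps power2_eq_square power3_eq_cube)
  ultimately have "0 < u * (soft_id y + y * soft_id' y)" by simp
  then show ?thesis using \<open>0 < u\<close> by (simp add: zero_less_mult_iff)
next
  case False
  then have "0 \<le> y * soft_id' y" using soft_id'_nonneg by simp
  then show ?thesis using soft_id_pos[of y] by linarith
qed

lemma surj_if_continuous_unbounded:
  fixes f :: "real \<Rightarrow> real"
  assumes "continuous_on UNIV f" and "\<And>v. \<exists>a. f a \<le> v" and "\<And>v. \<exists>b. v \<le> f b"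
  shows "surj f"
proof (rule surjI[of _ "\<lambda>v. SOME x. f x = v"], rule someI_ex)
  fix v
  obtain a b where "f a \<le> v" "v \<le> f b" using assms(2,3) by blast
  then show "\<exists>x. f x = v"
    using IVT'[where f = f and a = a and b = b and y = v]
      IVT2'[where f = f and a = b and b = a and y = v] continuous_on_subset[OF assms(1)]
    by (cases "a \<le> b") auto
qed

definition scaled_radius :: "real \<Rightarrow> real \<Rightarrow> real \<Rightarrow> real" where
  "scaled_radius m T r = (r - 2 * m) * exp (T / (4 * m))"

definition slice :: "real \<Rightarrow> real \<Rightarrow> real \<Rightarrow> real" where
  "slice m T r = T / 2 + r + 2 * m * ln (soft_id (scaled_radius m T r) / (2 * m))"

lemma slice_eq_Schwarzschild_slice:
  assumes "0 < m" and "1 \<le> scaled_radius m T r"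
  shows "slice m T r = T + rstar m r"
proof -
  have "0 < r - 2 * m"
    using assms(2) zero_less_mult_pos2[OF _ exp_gt_zero] unfolding scaled_radius_def
    by (meson less_le_trans zero_less_one)
  then have "0 < r / (2 * m) - 1"
    using \<open>0 < m\<close> by (simp add: field_simps)
  have "scaled_radius m T r / (2 * m) = (r / (2 * m) - 1) * exp (T / (4 * m))"
    using \<open>0 < m\<close> by (simp add: scaled_radius_def field_simps)
  then have "ln (scaled_radius m T r / (2 * m)) = ln (r / (2 * m) - 1) + T / (4 * m)"
    by (simp only: ln_mult_pos[OF \<open>0 < r / (2 * m) - 1\<close> exp_gt_zero] ln_exp)
  then show ?thesis
    using assms by (simp add: slice_def rstar_def soft_id_eq algebra_simps)
qed

lemma slice_has_derivative_T:
  fixes m T r :: real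
  assumes "0 < m"
  defines "y \<equiv> scaled_radius m T r"
  shows "((\<lambda>T. slice m T r) has_real_derivative (soft_id y + y * soft_id' y) / (2 * soft_id y)) (at T)"
proof -
  have "((\<lambda>T. scaled_radius m T r) has_real_derivative y / (4 * m)) (at T)"
    unfolding y_def scaled_radius_def using assms by (auto intro!: derivative_eq_intros)
  then have "((\<lambda>T. ln (soft_id (scaled_radius m T r) / (2 * m))) has_real_derivative
      1 / (soft_id y / (2 * m)) * (soft_id' y * (y / (4 * m)) / (2 * m))) (at T)"
    unfolding y_def
    by (intro DERIV_chain2[OF DERIV_ln_divide] DERIV_cdivide has_real_derivative_soft_id)
      (use assms soft_id_pos in auto)
  then have "((\<lambda>T. slice m T r) has_real_derivative
      1 / 2 + 0 + 2 * m * (1 / (soft_id y / (2 * m)) * (soft_id' y * (y / (4 * m)) / (2 * m)))) (at T)"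
    unfolding slice_def by (intro DERIV_add DERIV_cmult DERIV_const) (auto intro!: derivative_eq_intros)
  then show ?thesis
    using assms soft_id_pos[of y] by (simp add: field_simps)
qed

lemma slice_has_derivative_r:
  fixes m T r :: real
  assumes "0 < m"
  defines "y \<equiv> scaled_radius m T r"
  shows "((\<lambda>r. slice m T r) has_real_derivative 1 + 2 * m * exp (T / (4 * m)) * soft_id' y / soft_id y)
    (at r)"
proof -
  have "((\<lambda>r. scaled_radius m T r) has_real_derivative exp (T / (4 * m))) (at r)"
    unfolding scaled_radius_def by (auto intro!: derivative_eq_intros)
  then have "((\<lambda>r. ln (soft_id (scaled_radius m T r) / (2 * m))) has_real_derivative
      1 / (soft_id y / (2 * m)) * (soft_id' y * exp (T / (4 * m)) / (2 * m))) (at r)"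
    unfolding y_def
    by (intro DERIV_chain2[OF DERIV_ln_divide] DERIV_cdivide has_real_derivative_soft_id)
      (use assms soft_id_pos in auto)
  then have "((\<lambda>r. slice m T r) has_real_derivative
      0 + 1 + 2 * m * (1 / (soft_id y / (2 * m)) * (soft_id' y * exp (T / (4 * m)) / (2 * m)))) (at r)"
    unfolding slice_def by (intro DERIV_add DERIV_cmult DERIV_const DERIV_ident)
  then show ?thesis
    using assms soft_id_pos[of y] by (simp add: field_simps)
qed

lemma smooth2_slice:
  assumes "0 < m"
  shows "smooth2 U (case_prod (slice m))"
proof -
  have "smooth2 U (\<lambda>z. fst z / 2 + snd z
      + 2 * m * ln (soft_id ((snd z - 2 * m) * exp (fst z / (4 * m))) / (2 * m)))"
    by (intro smooth2_add smooth2_mult smooth2_divide_const smooth2_fst smooth2_snd smooth2_const smooth2_ln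
        smooth2_soft_id smooth2_diff smooth2_exp) (use assms soft_id_pos in auto)
  then show ?thesis by (simp add: slice_def scaled_radius_def split_beta')
qed

lemma strict_mono_slice:
  assumes "0 < m"
  shows "strict_mono (\<lambda>T. slice m T r)"
proof (rule strict_monoI)
  have "0 < (soft_id y + y * soft_id' y) / (2 * soft_id y)" for y
    using soft_id_plus_id_times_soft_id'_pos[of y] soft_id_pos[of y] by simp
  then have deriv_pos: "\<exists>d. ((\<lambda>T. slice m T r) has_real_derivative d) (at T) \<and> 0 < d" for T
    using slice_has_derivative_T[OF assms] by blast
  show "slice m a r < slice m b r" if "a < b" for a b
    by (rule DERIV_pos_imp_increasing[OF that]) (rule deriv_pos)
qed

lemma slice_lower_bound:
  assumes "0 < m"
  shows "T / 2 + r + 2 * m * ln (1 / (8 * m)) \<le> slice m T r"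
proof -
  have "1 / (8 * m) \<le> soft_id (scaled_radius m T r) / (2 * m)"
    using soft_id_ge_quarter[of "scaled_radius m T r"] assms by (simp add: field_simps)
  then show ?thesis
    using assms soft_id_pos[of "scaled_radius m T r"] by (simp add: slice_def)
qed

lemma slice_upper_bound:
  assumes "0 < m" and "T \<le> 0"
  shows "slice m T r \<le> T / 2 + r + 2 * m * ln ((\<bar>r - 2 * m\<bar> + 3 / 2) / (2 * m))"
proof -
  have "exp (T / (4 * m)) \<le> 1"
    using assms by (simp add: divide_nonpos_pos)
  then have "\<bar>scaled_radius m T r\<bar> \<le> \<bar>r - 2 * m\<bar>"
    by (simp add: scaled_radius_def abs_mult mult_left_le)
  then have "soft_id (scaled_radius m T r) \<le> \<bar>r - 2 * m\<bar> + 3 / 2"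
    using soft_id_le[of "scaled_radius m T r"] by linarith
  then have "ln (soft_id (scaled_radius m T r) / (2 * m)) \<le> ln ((\<bar>r - 2 * m\<bar> + 3 / 2) / (2 * m))"
    using assms soft_id_pos by (simp add: divide_right_mono)
  then show ?thesis
    using assms by (simp add: slice_def)
qed

lemma bij_slice:
  assumes "0 < m"
  shows "bij (\<lambda>T. slice m T r)"
proof (rule bijI)
  show "inj (\<lambda>T. slice m T r)"
    using strict_mono_slice[OF assms] by (rule strict_mono_imp_inj_on)
  show "surj (\<lambda>T. slice m T r)"
  proof (rule surj_if_continuous_unbounded)
    show "continuous_on UNIV (\<lambda>T. slice m T r)"
      using slice_has_derivative_T[OF assms] by (meson DERIV_isCont continuous_at_imp_continuous_on)
    fix v :: real
    define C where "C = r + 2 * m * ln ((\<bar>r - 2 * m\<bar> + 3 / 2) / (2 * m))"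
    define a where "a = min 0 (2 * v - 2 * C)"
    have "slice m a r \<le> a / 2 + C"
      using slice_upper_bound[OF assms, of a r] by (simp add: a_def C_def)
    moreover have "a \<le> 2 * v - 2 * C" by (simp add: a_def)
    ultimately have "slice m a r \<le> v" by linarith
    then show "\<exists>a. slice m a r \<le> v" by blast
    define C' where "C' = r + 2 * m * ln (1 / (8 * m))"
    define b where "b = 2 * v - 2 * C'"
    have "b / 2 + C' \<le> slice m b r"
      using slice_lower_bound[OF assms, of b r] by (simp add: C'_def)
    moreover have "b / 2 + C' = v" by (simp add: b_def field_simps)
    ultimately have "v \<le> slice m b r" by simp
    then show "\<exists>b. v \<le> slice m b r" by blast
  qed
qed

lemma inv_slice_slice: "0 < m \<Longrightarrow> inv (\<lambda>T. slice m T r) (slice m T r) = T"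
  by (rule inv_f_f[OF bij_is_inj[OF bij_slice]])

lemma slice_inv_slice: "0 < m \<Longrightarrow> slice m (inv (\<lambda>T. slice m T r) v) r = v"
  by (rule surj_f_inv_f[OF bij_is_surj[OF bij_slice]])

lemma deriv_slice_r:
  assumes "0 < m"
  shows "deriv (slice m T) r
    = 1 + 2 * m * exp (T / (4 * m)) * soft_id' (scaled_radius m T r) / soft_id (scaled_radius m T r)"
  by (rule DERIV_imp_deriv[OF slice_has_derivative_r[OF assms]])

lemma one_le_deriv_slice_r:
  assumes "0 < m"
  shows "1 \<le> deriv (slice m T) r"
  using assms soft_id_pos[of "scaled_radius m T r"] soft_id'_nonneg[of "scaled_radius m T r"]
  by (simp add: deriv_slice_r zero_le_divide_iff zero_le_mult_iff)

lemma lapse_mult_deriv_slice_r_le_one: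
  assumes "0 < m" and "0 < r"
  shows "lapse m r * deriv (slice m T) r \<le> 1"
proof (cases "r \<le> 2 * m")
  case True
  then have "lapse m r \<le> 0" using assms by (simp add: lapse_def field_simps)
  then show ?thesis using one_le_deriv_slice_r[OF assms(1)] by (smt (verit) mult_nonpos_nonneg)
next
  case False
  define E where "E = exp (T / (4 * m))"
  define y where "y = scaled_radius m T r"
  have y: "y = (r - 2 * m) * E" by (simp add: y_def scaled_radius_def E_def)
  then have "y * soft_id' y / soft_id y \<le> 1"
    using False mult_soft_id'_le_soft_id[of y] soft_id_pos[of y] by (simp add: E_def)
  then have "2 * m / (r - 2 * m) * (y * soft_id' y / soft_id y) \<le> 2 * m / (r - 2 * m)"
    using False assms by (intro mult_left_le) auto
  moreover have "2 * m * E * p / q = 2 * m / (r - 2 * m) * ((r - 2 * m) * E * p / q)" for p q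
    using False by simp
  then have "deriv (slice m T) r = 1 + 2 * m / (r - 2 * m) * (y * soft_id' y / soft_id y)"
    unfolding deriv_slice_r[OF assms(1)] E_def[symmetric] y_def[symmetric] by (simp only: y[symmetric])
  ultimately have "deriv (slice m T) r \<le> r / (r - 2 * m)"
    using False by (simp add: field_simps)
  then have "lapse m r * deriv (slice m T) r \<le> lapse m r * (r / (r - 2 * m))"
    using False assms by (intro mult_left_mono) (auto simp: lapse_def field_simps)
  also have "\<dots> = 1"
    using False assms by (simp add: lapse_def field_simps)
  finally show ?thesis .
qed

lemma spacelike_graph_slice:
  assumes "0 < m" and "0 < r"
  shows "spacelike_graph m (slice m T) r"
proof -
  let ?a = "deriv (slice m T) r"
  have "0 < ?a" and "0 < 2 - lapse m r * ?a"
    using one_le_deriv_slice_r[OF assms(1), of T r] lapse_mult_deriv_slice_r_le_one[OF assms, of T] by linarith+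
  then have "0 < ?a * (2 - lapse m r * ?a)"
    by (rule mult_pos_pos)
  then show ?thesis
    by (simp add: spacelike_graph_def power2_eq_square algebra_simps)
qed

lemma scaled_radius_ge_one_iff:
  assumes "0 < m"
  shows "1 \<le> scaled_radius m T r \<longleftrightarrow> 2 * m + exp (- T / (4 * m)) \<le> r"
proof -
  have "0 < exp (T / (4 * m))" by simp
  then have "1 \<le> scaled_radius m T r \<longleftrightarrow> 1 / exp (T / (4 * m)) \<le> r - 2 * m"
    by (simp add: scaled_radius_def divide_le_eq)
  moreover have "1 / exp (T / (4 * m)) = exp (- T / (4 * m))"
    by (simp add: exp_minus inverse_eq_divide)
  ultimately show ?thesis by linarith
qed

lemma tangentially_maximal_slice:
  assumes "0 < m" and "1 \<le> scaled_radius m T r"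
  shows "tangentially_maximal_at m (slice m T) r"
proof -
  have "0 < r - 2 * m"
    using assms scaled_radius_ge_one_iff by (smt (verit) exp_gt_zero)
  then have "0 < r" using assms(1) by simp
  have "deriv (slice m T) r = 1 + 2 * m * exp (T / (4 * m)) / scaled_radius m T r"
    using assms by (simp add: deriv_slice_r soft_id_eq soft_id'_eq)
  also have "\<dots> = r / (r - 2 * m)"
    using \<open>0 < r - 2 * m\<close> by (simp add: scaled_radius_def field_simps)
  finally have "deriv (slice m T) r = r / (r - 2 * m)" .
  then show ?thesis
    using \<open>0 < r - 2 * m\<close> \<open>0 < r\<close>
    unfolding tangentially_maximal_at_def lapse_def \<open>deriv (slice m T) r = r / (r - 2 * m)\<close>
    by (simp add: field_simps)
qed

lemma smooth2_slice_inverse: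
  assumes "0 < m"
  shows "smooth2 EF_region (\<lambda>(v, r). inv (\<lambda>T. slice m T r) v)"
  unfolding EF_region_def
proof (rule smooth2_inverse_in_first_variable)
  show "smooth2 (UNIV \<times> {0<..}) (case_prod (slice m))"
    using assms by (rule smooth2_slice)
  show "((\<lambda>T. slice m T r) has_real_derivative
      (soft_id (scaled_radius m T r) + scaled_radius m T r * soft_id' (scaled_radius m T r))
        / (2 * soft_id (scaled_radius m T r))) (at T)" for T r
    using assms by (rule slice_has_derivative_T)
  show "(soft_id (scaled_radius m T r) + scaled_radius m T r * soft_id' (scaled_radius m T r))
        / (2 * soft_id (scaled_radius m T r)) \<noteq> 0" for T r
    using soft_id_plus_id_times_soft_id'_pos[of "scaled_radius m T r"] soft_id_pos[of "scaled_radius m T r"]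
    by simp
qed (use inv_slice_slice[OF assms] slice_inv_slice[OF assms] in simp_all)

theorem mainTheorem10:
  fixes m :: real
  assumes "m > 0"
  shows "\<exists>V :: real \<Rightarrow> real \<Rightarrow> real.
    \<comment> \<open>smooth one-parameter family Sigma_T = {v = V T r, r > 0}\<close>
    smooth2 EF_region (case_prod V) \<and>
    (\<forall>T. \<forall>r>0. spacelike_graph m (V T) r) \<and>
    \<comment> \<open>(i) (T,r) \<mapsto> (V T r, r) is a diffeomorphism of R \<times> (0,\<infinity>) onto itself\<close>
    (\<exists>Tf :: real \<Rightarrow> real \<Rightarrow> real. smooth2 EF_region (case_prod Tf) \<and>
        (\<forall>T. \<forall>r>0. Tf (V T r) r = T) \<and> (\<forall>v. \<forall>r>0. V (Tf v r) r = v)) \<and>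
    \<comment> \<open>(ii) S_T = Sigma_T \<inter> {r = 2m} foliate the horizon and are MOTS\<close>
    bij (\<lambda>T. V T (2 * m)) \<and>
    is_MOTS_sphere m (2 * m) \<and>
    \<comment> \<open>(iii)\<close>
    (\<exists>\<delta>0 > 0. let rcut = (\<lambda>T. 2 * m + 2 * \<delta>0 * exp (- T / (4 * m))) in
       (rcut \<longlongrightarrow> 2 * m) at_top \<and>
       (\<forall>T1 T2. T1 < T2 \<longrightarrow> rcut T2 < rcut T1) \<and>
       (\<forall>T. \<forall>r \<ge> rcut T. \<forall>v. (v = V T r) \<longleftrightarrow> (t_Sch m v r = T)) \<and>
       (\<forall>T. \<forall>r \<ge> rcut T. tangentially_maximal_at m (V T) r))"
proof -
  have far: "1 \<le> scaled_radius m T r" if "2 * m + 2 * (1 / 2) * exp (- T / (4 * m)) \<le> r" for T r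
    using that scaled_radius_ge_one_iff[OF assms] by simp
  show ?thesis
    unfolding Let_def
  proof (rule exI[of _ "slice m"],
      intro exI[of _ "\<lambda>v r. inv (\<lambda>T. slice m T r) v"] exI[of _ "1 / 2 :: real"] conjI allI impI)
    show "smooth2 EF_region (case_prod (slice m))"
      using assms by (rule smooth2_slice)
    show "spacelike_graph m (slice m T) r" if "0 < r" for T r
      using assms that by (rule spacelike_graph_slice)
    show "smooth2 EF_region (\<lambda>(v, r). inv (\<lambda>T. slice m T r) v)"
      using assms by (rule smooth2_slice_inverse)
    show "inv (\<lambda>T. slice m T r) (slice m T r) = T" for T r
      using assms by (rule inv_slice_slice)
    show "slice m (inv (\<lambda>T. slice m T r) v) r = v" for v r
      using assms by (rule slice_inv_slice)
    show "bij (\<lambda>T. slice m T (2 * m))"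
      using assms by (rule bij_slice)
    show "is_MOTS_sphere m (2 * m)"
      using assms by (simp add: is_MOTS_sphere_def outgoing_expansion_def lapse_def)
    show "((\<lambda>T. 2 * m + 2 * (1 / 2) * exp (- T / (4 * m))) \<longlongrightarrow> 2 * m) at_top"
      using assms by real_asymp
    show "2 * m + 2 * (1 / 2) * exp (- T2 / (4 * m)) < 2 * m + 2 * (1 / 2) * exp (- T1 / (4 * m))"
      if "T1 < T2" for T1 T2
      using assms that by (simp add: divide_strict_right_mono)
    show "(v = slice m T r) = (t_Sch m v r = T)"
      if "2 * m + 2 * (1 / 2) * exp (- T / (4 * m)) \<le> r" for T r v
      using slice_eq_Schwarzschild_slice[OF assms far[OF that]] by (auto simp: t_Sch_def)
    show "tangentially_maximal_at m (slice m T) r"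
      if "2 * m + 2 * (1 / 2) * exp (- T / (4 * m)) \<le> r" for T r
      using assms far[OF that] by (rule tangentially_maximal_slice)
  qed simp
qed

end
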